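(* Let $D\subset\mathbb R^d$ be compact and let $L_1,L_2$ be compact metric spaces. Let $\varphi_i:D\times L_i\to\mathbb R^n$ ($i=1,2$) be continuous maps such that (a) they are $\alpha$-Hölder with respect to $x$: there are $C>0$ and $\alpha\in(0,1]$ with $\|\varphi_i(\xi,x)-\varphi_i(\xi,y)\|\le C\,\rho_i(x,y)^\alpha$ for all $\xi\in D$, $x,y\in L_i$ ($\rho_i$ the metric of $L_i$); and (b) there is $M>0$ such that for all $x_1\in L_1$, $x_2\in L_2$, $\xi,\xi'\in D$, the function $\Phi(\xi,x_1,x_2)=\varphi_1(\xi,x_1)-\varphi_2(\xi,x_2)$ satisfies $\|\Phi(\xi',x_1,x_2)-\Phi(\xi,x_1,x_2)\|\ge M|\xi'-\xi|$. Then $\Delta=\{\xi\in D:\varphi_1(\xi,L_1)\cap\varphi_2(\xi,L_2)\neq\varnothing\}$ is a compact set and $$\dim_H\Delta\le\min\left\{\frac{\dim_H(L_1\times L_2)}{\alpha},\,d\right\}.$$ *)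

theory Defs
  imports "HOL-Analysis.Analysis"
begin

definition hausdorff_content :: "real \<Rightarrow> real \<Rightarrow> 'a::metric_space set \<Rightarrow> ennreal" where
  "hausdorff_content s \<delta> A =
     (INF U \<in> {U :: nat \<Rightarrow> 'a set. A \<subseteq> (\<Union>i. U i) \<and> (\<forall>i. bounded (U i) \<and> diameter (U i) \<le> \<delta>)}.
        (\<Sum>i. ennreal (diameter (U i) powr s)))"

definition hausdorff_measure :: "real \<Rightarrow> 'a::metric_space set \<Rightarrow> ennreal" where
  "hausdorff_measure s A = (SUP \<delta> \<in> {0<..}. hausdorff_content s \<delta> A)"

definition hausdorff_dim :: "'a::metric_space set \<Rightarrow> ereal" where
  "hausdorff_dim A = Inf (ereal ` {s. s > 0 \<and> hausdorff_measure s A = 0})"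

end

theory Submission
  imports Defs
begin

text \<open>The parameter \<xi> of a coincidence \<phi>1 \<xi> x1 = \<phi>2 \<xi> x2 is determined by the pair (x1, x2):
  comparing two coincidences with the transversality condition (b) and the H\<ouml>lder condition (a)
  gives M |\<xi>' - \<xi>| \<le> 2C |(x1, x2) - (y1, y2)|^\<alpha>. Hence \<Delta> is the image of a subset of
  L1 \<times> L2 under an \<alpha>-H\<ouml>lder map, and an \<alpha>-H\<ouml>lder map multiplies Hausdorff dimension by at most
  1/\<alpha>. The bound by d holds for every bounded subset of \<real>^d, by covering it with O(N^d) grid
  cells of diameter at most d/N. Compactness holds because \<Delta> is the projection of the compact zero set of
  (\<xi>, x1, x2) \<mapsto> \<phi>1 \<xi> x1 - \<phi>2 \<xi> x2.\<close>

lemma hausdorff_content_le_cover: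
  assumes "A \<subseteq> (\<Union>i. U i)" "\<And>i. bounded (U i)" "\<And>i. diameter (U i) \<le> \<delta>"
  shows "hausdorff_content s \<delta> A \<le> (\<Sum>i. ennreal (diameter (U i) powr s))"
  unfolding hausdorff_content_def by (rule INF_lower) (use assms in auto)

lemma hausdorff_content_le_finite_cover:
  assumes "finite F" "A \<subseteq> \<Union>F" "\<And>V. V \<in> F \<Longrightarrow> bounded V \<and> diameter V \<le> \<delta>" "0 \<le> \<delta>"
  shows "hausdorff_content s \<delta> A \<le> ennreal (\<Sum>V\<in>F. diameter V powr s)"
proof -
  obtain f where f: "bij_betw f {0..<card F} F" using ex_bij_betw_nat_finite[OF assms(1)] by blast
  define U where "U n = (if n < card F then f n else {})" for n
  have "A \<subseteq> (\<Union>i. U i)"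
  proof
    fix x assume "x \<in> A"
    then obtain V where "V \<in> F" "x \<in> V" using assms(2) by blast
    then have "V \<in> f ` {0..<card F}" using f by (simp add: bij_betw_def)
    then obtain n where "n < card F" "f n = V" by auto
    then show "x \<in> (\<Union>i. U i)" using \<open>x \<in> V\<close> unfolding U_def by (intro UN_I[of n]) auto
  qed
  moreover have "bounded (U i) \<and> diameter (U i) \<le> \<delta>" for i
    using assms(3,4) bij_betw_apply[OF f] by (auto simp: U_def)
  ultimately have "hausdorff_content s \<delta> A \<le> (\<Sum>i. ennreal (diameter (U i) powr s))"
    by (intro hausdorff_content_le_cover) auto
  also have "\<dots> = (\<Sum>i\<in>{0..<card F}. ennreal (diameter (f i) powr s))"
    by (subst suminf_finite[of "{0..<card F}"]) (auto simp: U_def intro!: sum.cong)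
  also have "\<dots> = (\<Sum>V\<in>F. ennreal (diameter V powr s))"
    using sum.reindex_bij_betw[OF f, of "\<lambda>V. ennreal (diameter V powr s)"] by simp
  finally show ?thesis by simp
qed

lemma hausdorff_measure_zeroI:
  assumes "\<And>\<delta> \<epsilon>. \<delta> > 0 \<Longrightarrow> \<epsilon> > 0 \<Longrightarrow> hausdorff_content s \<delta> A \<le> ennreal \<epsilon>"
  shows "hausdorff_measure s A = 0"
proof -
  have "hausdorff_content s \<delta> A \<le> 0" if "\<delta> > 0" for \<delta>
    by (rule ennreal_le_epsilon) (use assms that in auto)
  then show ?thesis unfolding hausdorff_measure_def by (simp add: SUP_eq_const)
qed

lemma hausdorff_measure_zeroD:
  assumes "hausdorff_measure s A = 0" "\<delta> > 0" "\<epsilon> > 0"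
  obtains U where "A \<subseteq> (\<Union>i. U i)" "\<And>i. bounded (U i)" "\<And>i. diameter (U i) \<le> \<delta>"
    "(\<Sum>i. ennreal (diameter (U i) powr s)) < ennreal \<epsilon>"
proof -
  have "hausdorff_content s \<delta> A \<le> hausdorff_measure s A"
    unfolding hausdorff_measure_def by (rule SUP_upper) (use assms in auto)
  then have "hausdorff_content s \<delta> A < ennreal \<epsilon>" using assms by simp
  then show ?thesis using that unfolding hausdorff_content_def by (subst (asm) INF_less_iff) auto
qed

lemma hausdorff_measure_zero_subset:
  assumes "A \<subseteq> B" "hausdorff_measure s B = 0"
  shows "hausdorff_measure s A = 0"
proof (rule hausdorff_measure_zeroI)
  fix \<delta> \<epsilon> :: real assume "\<delta> > 0" "\<epsilon> > 0"
  obtain U where U: "B \<subseteq> (\<Union>i. U i)" "\<And>i. bounded (U i)" "\<And>i. diameter (U i) \<le> \<delta>"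
    "(\<Sum>i. ennreal (diameter (U i) powr s)) < ennreal \<epsilon>"
    by (rule hausdorff_measure_zeroD[OF assms(2) \<open>\<delta> > 0\<close> \<open>\<epsilon> > 0\<close>]) blast
  have "hausdorff_content s \<delta> A \<le> (\<Sum>i. ennreal (diameter (U i) powr s))"
    by (rule hausdorff_content_le_cover) (use U assms(1) in auto)
  then show "hausdorff_content s \<delta> A \<le> ennreal \<epsilon>" using U(4) by simp
qed

lemma hausdorff_dim_mono:
  assumes "A \<subseteq> B"
  shows "hausdorff_dim A \<le> hausdorff_dim B"
proof -
  have "{s. s > 0 \<and> hausdorff_measure s B = 0} \<subseteq> {s. s > 0 \<and> hausdorff_measure s A = 0}"
    using hausdorff_measure_zero_subset[OF assms] by blast
  then show ?thesis unfolding hausdorff_dim_def by (intro Inf_superset_mono image_mono)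
qed

lemma hausdorff_dim_le_ereal:
  assumes "0 \<le> t" "\<And>s. t < s \<Longrightarrow> hausdorff_measure s A = 0"
  shows "hausdorff_dim A \<le> ereal t"
proof (rule dense_ge)
  fix y assume y: "ereal t < y"
  show "hausdorff_dim A \<le> y"
  proof (cases y)
    case (real r)
    then have "r > 0" "hausdorff_measure r A = 0" using assms y by auto
    then show ?thesis unfolding hausdorff_dim_def real by (intro Inf_lower) auto
  qed (use y in auto)
qed

lemma diameter_holder_image_le:
  fixes g :: "'a::metric_space \<Rightarrow> 'b::metric_space"
  assumes H: "\<And>x y. x \<in> A \<Longrightarrow> y \<in> A \<Longrightarrow> dist (g x) (g y) \<le> K * dist x y powr \<alpha>"
    and "K \<ge> 0" "\<alpha> > 0" "bounded U"
  shows "bounded (g ` (U \<inter> A))" "diameter (g ` (U \<inter> A)) \<le> K * diameter U powr \<alpha>"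
proof -
  have dist_le: "dist u v \<le> K * diameter U powr \<alpha>" if uv: "u \<in> g ` (U \<inter> A)" "v \<in> g ` (U \<inter> A)" for u v
  proof -
    obtain x y where xy: "x \<in> U \<inter> A" "y \<in> U \<inter> A" "u = g x" "v = g y" using uv by blast
    then have "dist u v \<le> K * dist x y powr \<alpha>" using H by auto
    also have "\<dots> \<le> K * diameter U powr \<alpha>"
      using assms(2-4) diameter_bounded_bound[OF assms(4), of x y] xy
      by (intro mult_left_mono powr_mono2) auto
    finally show ?thesis .
  qed
  then show "bounded (g ` (U \<inter> A))" unfolding bounded_two_points by blast
  show "diameter (g ` (U \<inter> A)) \<le> K * diameter U powr \<alpha>"
  proof (cases "U \<inter> A = {}")
    case False
    then have "(SUP (u, v)\<in>g ` (U \<inter> A) \<times> g ` (U \<inter> A). dist u v) \<le> K * diameter U powr \<alpha>"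
      by (intro cSUP_least) (auto intro: dist_le)
    then show ?thesis using False unfolding diameter_def by simp
  qed (use assms(2) in simp)
qed

lemma hausdorff_measure_zero_holder_image:
  fixes g :: "'a::metric_space \<Rightarrow> 'b::metric_space"
  assumes H: "\<And>x y. x \<in> A \<Longrightarrow> y \<in> A \<Longrightarrow> dist (g x) (g y) \<le> K * dist x y powr \<alpha>"
    and K: "K > 0" and \<alpha>: "\<alpha> > 0" and s: "s > 0"
    and zero: "hausdorff_measure s A = 0"
  shows "hausdorff_measure (s / \<alpha>) (g ` A) = 0"
proof (rule hausdorff_measure_zeroI)
  fix \<delta> \<epsilon> :: real assume \<delta>: "\<delta> > 0" and \<epsilon>: "\<epsilon> > 0"
  define \<delta>' where "\<delta>' = (\<delta> / K) powr (1 / \<alpha>)"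
  define c where "c = K powr (s / \<alpha>)"
  have "\<delta>' > 0" "c > 0" "\<epsilon> / c > 0" using \<delta> \<epsilon> K by (simp_all add: \<delta>'_def c_def)
  have \<delta>'K: "K * \<delta>' powr \<alpha> = \<delta>" using \<delta> K \<alpha> by (simp add: \<delta>'_def powr_powr)
  obtain U where U: "A \<subseteq> (\<Union>i. U i)" "\<And>i. bounded (U i)" "\<And>i. diameter (U i) \<le> \<delta>'"
    and small: "(\<Sum>i. ennreal (diameter (U i) powr s)) < ennreal (\<epsilon> / c)"
    by (rule hausdorff_measure_zeroD[OF zero \<open>\<delta>' > 0\<close> \<open>\<epsilon> / c > 0\<close>]) blast
  define V where "V i = g ` (U i \<inter> A)" for i
  have V: "bounded (V i)" "diameter (V i) \<le> K * diameter (U i) powr \<alpha>" for i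
    unfolding V_def using diameter_holder_image_le[OF H _ \<alpha> U(2)] K by auto
  have diam_V: "diameter (V i) \<le> \<delta>" for i
  proof -
    have "K * diameter (U i) powr \<alpha> \<le> K * \<delta>' powr \<alpha>"
      using K \<alpha> U(3)[of i] diameter_ge_0[OF U(2)] by (intro mult_left_mono powr_mono2) auto
    then show ?thesis using V(2)[of i] K \<delta>'K by simp
  qed
  have "g ` A \<subseteq> (\<Union>i. V i)" using U(1) unfolding V_def by blast
  then have "hausdorff_content (s / \<alpha>) \<delta> (g ` A) \<le> (\<Sum>i. ennreal (diameter (V i) powr (s / \<alpha>)))"
    using K V(1) diam_V by (intro hausdorff_content_le_cover) auto
  also have "\<dots> \<le> (\<Sum>i. ennreal c * ennreal (diameter (U i) powr s))"
  proof (intro suminf_le allI)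
    fix i
    have "diameter (V i) powr (s / \<alpha>) \<le> (K * diameter (U i) powr \<alpha>) powr (s / \<alpha>)"
      using K V s \<alpha> diameter_ge_0[of "V i"] by (intro powr_mono2) auto
    also have "\<dots> = c * diameter (U i) powr s"
      using K \<alpha> diameter_ge_0[OF U(2)] by (simp add: c_def powr_mult powr_powr)
    finally show "ennreal (diameter (V i) powr (s / \<alpha>)) \<le> ennreal c * ennreal (diameter (U i) powr s)"
      using \<open>c > 0\<close> by (simp add: ennreal_mult[symmetric])
  qed auto
  also have "\<dots> = ennreal c * (\<Sum>i. ennreal (diameter (U i) powr s))" by simp
  also have "\<dots> \<le> ennreal c * ennreal (\<epsilon> / c)"
    using small by (intro mult_left_mono) auto
  also have "\<dots> = ennreal \<epsilon>" using \<open>c > 0\<close> \<epsilon> by (subst ennreal_mult[symmetric]) auto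
  finally show "hausdorff_content (s / \<alpha>) \<delta> (g ` A) \<le> ennreal \<epsilon>" .
qed

lemma hausdorff_dim_holder_image:
  fixes g :: "'a::metric_space \<Rightarrow> 'b::metric_space"
  assumes H: "\<And>x y. x \<in> A \<Longrightarrow> y \<in> A \<Longrightarrow> dist (g x) (g y) \<le> K * dist x y powr \<alpha>"
    and K: "K > 0" and \<alpha>: "\<alpha> > 0"
  shows "hausdorff_dim (g ` A) \<le> hausdorff_dim A / ereal \<alpha>"
proof -
  have "ereal \<alpha> * hausdorff_dim (g ` A) \<le> hausdorff_dim A"
    unfolding hausdorff_dim_def[of A]
  proof (rule Inf_greatest)
    fix y assume "y \<in> ereal ` {s. s > 0 \<and> hausdorff_measure s A = 0}"
    then obtain s where s: "s > 0" "hausdorff_measure s A = 0" "y = ereal s" by blast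
    then have "hausdorff_measure (s / \<alpha>) (g ` A) = 0"
      using hausdorff_measure_zero_holder_image[OF H K \<alpha>] by blast
    then have "hausdorff_dim (g ` A) \<le> ereal (s / \<alpha>)"
      unfolding hausdorff_dim_def using s \<alpha> by (intro Inf_lower) auto
    then have "ereal \<alpha> * hausdorff_dim (g ` A) \<le> ereal \<alpha> * ereal (s / \<alpha>)"
      using \<alpha> by (intro ereal_mult_left_mono) auto
    then show "ereal \<alpha> * hausdorff_dim (g ` A) \<le> y" using \<alpha> s(3) by simp
  qed
  then show ?thesis using \<alpha> by (subst ereal_le_divide_pos) auto
qed

definition grid_cell :: "nat \<Rightarrow> 'd::euclidean_space \<Rightarrow> 'd \<Rightarrow> int" where
  "grid_cell N x = restrict (\<lambda>i. \<lfloor>(x \<bullet> i) * N\<rfloor>) Basis"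

lemma dist_le_if_same_grid_cell:
  fixes x y :: "'d::euclidean_space"
  assumes N: "N > 0" and cell: "grid_cell N x = grid_cell N y"
  shows "dist x y \<le> DIM('d) / N"
proof -
  have "norm (x - y) \<le> (\<Sum>i\<in>Basis. \<bar>(x - y) \<bullet> i\<bar>)" by (rule norm_le_l1)
  also have "\<dots> \<le> (\<Sum>i\<in>(Basis::'d set). 1 / N)"
  proof (rule sum_mono)
    fix i :: 'd assume i: "i \<in> Basis"
    have "grid_cell N x i = grid_cell N y i" using cell by simp
    then have "\<lfloor>(x \<bullet> i) * N\<rfloor> = \<lfloor>(y \<bullet> i) * N\<rfloor>" using i by (simp add: grid_cell_def)
    then have "\<bar>x \<bullet> i * N - y \<bullet> i * N\<bar> < 1"
      using floor_correct[of "x \<bullet> i * N"] floor_correct[of "y \<bullet> i * N"] by linarith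
    moreover have "\<bar>(x - y) \<bullet> i\<bar> * N = \<bar>x \<bullet> i * N - y \<bullet> i * N\<bar>"
      using N by (simp add: inner_diff_left abs_mult flip: left_diff_distrib)
    ultimately have "\<bar>(x - y) \<bullet> i\<bar> * N < 1" by simp
    then show "\<bar>(x - y) \<bullet> i\<bar> \<le> 1 / N" using N by (simp add: pos_le_divide_eq)
  qed
  finally show ?thesis by (simp add: dist_norm)
qed

lemma grid_cell_in_PiE:
  fixes x :: "'d::euclidean_space"
  assumes "norm x \<le> R"
  shows "grid_cell N x \<in> PiE Basis (\<lambda>_. {-\<lceil>R * N\<rceil>..\<lceil>R * N\<rceil>})"
proof (clarsimp simp: grid_cell_def)
  fix i :: 'd assume "i \<in> Basis"
  then have "\<bar>x \<bullet> i\<bar> \<le> R" using assms Basis_le_norm order_trans by blast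
  then have "\<bar>x \<bullet> i * N\<bar> \<le> R * N" by (simp add: abs_mult mult_right_mono)
  then have "- (R * N) \<le> x \<bullet> i * N" "x \<bullet> i * N \<le> R * N" by linarith+
  then show "- \<lceil>R * N\<rceil> \<le> \<lfloor>x \<bullet> i * N\<rfloor> \<and> \<lfloor>x \<bullet> i * N\<rfloor> \<le> \<lceil>R * N\<rceil>" by linarith
qed

lemma bounded_euclidean_grid_cover:
  fixes B :: "'d::euclidean_space set" and R :: real and N :: nat
  assumes R: "\<And>x. x \<in> B \<Longrightarrow> norm x \<le> R" "R \<ge> 0" and N: "N > 0"
  obtains F where "finite F" "B \<subseteq> \<Union>F" "\<And>V. V \<in> F \<Longrightarrow> bounded V \<and> diameter V \<le> DIM('d) / N"
    "real (card F) \<le> ((2 * R + 3) * N) ^ DIM('d)"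
proof -
  define m where "m = \<lceil>R * N\<rceil>"
  define F where "F = (\<lambda>k. {x\<in>B. grid_cell N x = k}) ` (grid_cell N ` B)"
  have cells: "grid_cell N ` B \<subseteq> PiE Basis (\<lambda>_. {-m..m})"
    using grid_cell_in_PiE R(1) unfolding m_def by blast
  have fin: "finite (PiE (Basis :: 'd set) (\<lambda>_. {-m..m}))" by (intro finite_PiE) auto
  have "finite F" unfolding F_def using finite_subset[OF cells fin] by blast
  moreover have "B \<subseteq> \<Union>F" unfolding F_def by blast
  moreover have "bounded V \<and> diameter V \<le> DIM('d) / N" if "V \<in> F" for V
  proof
    obtain k where V: "V = {x\<in>B. grid_cell N x = k}" using \<open>V \<in> F\<close> unfolding F_def by blast
    have "bounded B" unfolding bounded_iff using R(1) by blast
    then show "bounded V" unfolding V by (rule bounded_subset) auto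
    have "dist x y \<le> DIM('d) / N" if "x \<in> V" "y \<in> V" for x y
      using that N by (intro dist_le_if_same_grid_cell) (simp_all add: V)
    then show "diameter V \<le> DIM('d) / N"
      unfolding dist_norm by (intro diameter_le) simp_all
  qed
  moreover have "real (card F) \<le> ((2 * R + 3) * N) ^ DIM('d)"
  proof -
    have "card F \<le> card (grid_cell N ` B)"
      unfolding F_def using finite_subset[OF cells fin] by (rule card_image_le)
    also have "\<dots> \<le> card (PiE (Basis :: 'd set) (\<lambda>_. {-m..m}))"
      by (rule card_mono[OF fin cells])
    also have "\<dots> = nat (2 * m + 1) ^ DIM('d)" by (simp add: card_PiE)
    finally have "real (card F) \<le> real (nat (2 * m + 1)) ^ DIM('d)"
      by (metis of_nat_le_iff of_nat_power)
    also have "\<dots> \<le> ((2 * R + 3) * N) ^ DIM('d)"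
    proof (rule power_mono)
      have "R * N \<ge> 0" using R(2) by simp
      then have "m \<ge> 0" "real_of_int m \<le> R * N + 1" unfolding m_def by linarith+
      moreover have "1 \<le> real N" using N by simp
      ultimately show "real (nat (2 * m + 1)) \<le> (2 * R + 3) * N"
        using R(2) by (simp add: of_nat_nat distrib_right)
    qed simp
    finally show ?thesis .
  qed
  ultimately show ?thesis using that by blast
qed

lemma hausdorff_measure_zero_bounded_euclidean:
  fixes B :: "'d::euclidean_space set"
  assumes "bounded B" and s: "s > real DIM('d)"
  shows "hausdorff_measure s B = 0"
proof (rule hausdorff_measure_zeroI)
  fix \<delta> \<epsilon> :: real assume \<delta>: "\<delta> > 0" and \<epsilon>: "\<epsilon> > 0"
  define d where "d = real DIM('d)"
  obtain R where R: "R > 0" "\<And>x. x \<in> B \<Longrightarrow> norm x \<le> R"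
    using assms(1) bounded_pos by blast
  define c where "c = (2 * R + 3) ^ DIM('d) * d powr s"
  have "((\<lambda>n. c * real n powr (d - s)) \<longlongrightarrow> c * 0) sequentially"
    using s by (intro tendsto_mult tendsto_const tendsto_neg_powr filterlim_real_sequentially)
      (auto simp: d_def)
  then have "eventually (\<lambda>n. c * real n powr (d - s) < \<epsilon> \<and> n \<ge> nat \<lceil>d / \<delta>\<rceil> + 1) sequentially"
    using \<epsilon> by (intro eventually_conj order_tendstoD eventually_ge_at_top) auto
  then obtain N where small: "c * real N powr (d - s) < \<epsilon>" and N: "N \<ge> nat \<lceil>d / \<delta>\<rceil> + 1"
    unfolding eventually_sequentially by blast
  have "N > 0" using N by simp
  have "d / \<delta> \<le> N" using N by linarith
  then have "d / N \<le> \<delta>" using \<delta> \<open>N > 0\<close> by (simp add: field_simps)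
  obtain F where F: "finite F" "B \<subseteq> \<Union>F" "\<And>V. V \<in> F \<Longrightarrow> bounded V \<and> diameter V \<le> d / N"
    and card: "real (card F) \<le> ((2 * R + 3) * N) ^ DIM('d)"
    using bounded_euclidean_grid_cover[OF R(2) _ \<open>N > 0\<close>] R(1) unfolding d_def by auto
  have "hausdorff_content s \<delta> B \<le> ennreal (\<Sum>V\<in>F. diameter V powr s)"
    using F \<open>d / N \<le> \<delta>\<close> \<delta> by (intro hausdorff_content_le_finite_cover) force+
  also have "(\<Sum>V\<in>F. diameter V powr s) \<le> (\<Sum>V\<in>F. (d / N) powr s)"
    using F(3) s by (intro sum_mono powr_mono2) (auto simp: diameter_ge_0 d_def)
  also have "\<dots> = real (card F) * (d / N) powr s" by simp
  also have "\<dots> \<le> ((2 * R + 3) * N) ^ DIM('d) * (d / N) powr s"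
    by (intro mult_right_mono card) auto
  also have "\<dots> = c * real N powr (d - s)"
    using \<open>N > 0\<close> by (simp add: c_def d_def power_mult_distrib powr_divide powr_diff
      powr_realpow[symmetric])
  also have "\<dots> \<le> \<epsilon>" using small by simp
  finally show "hausdorff_content s \<delta> B \<le> ennreal \<epsilon>" by (simp add: ennreal_leI)
qed

lemma hausdorff_dim_bounded_euclidean_le:
  fixes B :: "'d::euclidean_space set"
  assumes "bounded B"
  shows "hausdorff_dim B \<le> ereal (real DIM('d))"
  by (rule hausdorff_dim_le_ereal) (use hausdorff_measure_zero_bounded_euclidean[OF assms] in auto)

lemma compact_coincidence_parameters:
  fixes D :: "'d::metric_space set" and L1 :: "'a::metric_space set" and L2 :: "'b::metric_space set"
    and \<phi>1 :: "'d \<Rightarrow> 'a \<Rightarrow> 'n::real_normed_vector" and \<phi>2 :: "'d \<Rightarrow> 'b \<Rightarrow> 'n"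
  assumes "compact D" "compact L1" "compact L2"
    and cont1: "continuous_on (D \<times> L1) (\<lambda>(\<xi>, x). \<phi>1 \<xi> x)"
    and cont2: "continuous_on (D \<times> L2) (\<lambda>(\<xi>, x). \<phi>2 \<xi> x)"
  shows "compact {\<xi>\<in>D. \<phi>1 \<xi> ` L1 \<inter> \<phi>2 \<xi> ` L2 \<noteq> {}}"
proof -
  define K where "K = D \<times> (L1 \<times> L2)"
  define f where "f q = \<phi>1 (fst q) (fst (snd q)) - \<phi>2 (fst q) (snd (snd q))" for q :: "'d \<times> 'a \<times> 'b"
  have "compact K" unfolding K_def using assms(1-3) by (intro compact_Times)
  have "continuous_on K (\<lambda>q. (\<lambda>(\<xi>, x). \<phi>1 \<xi> x) (fst q, fst (snd q)))"
    by (rule continuous_on_compose2[OF cont1]) (auto simp: K_def intro!: continuous_intros)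
  moreover have "continuous_on K (\<lambda>q. (\<lambda>(\<xi>, x). \<phi>2 \<xi> x) (fst q, snd (snd q)))"
    by (rule continuous_on_compose2[OF cont2]) (auto simp: K_def intro!: continuous_intros)
  ultimately have "continuous_on K f" unfolding f_def by (simp add: continuous_on_diff)
  then have "closed {q\<in>K. f q = 0}"
    using \<open>compact K\<close> by (intro continuous_closed_preimage_constant compact_imp_closed)
  then have "compact (K \<inter> {q\<in>K. f q = 0})" by (rule compact_Int_closed[OF \<open>compact K\<close>])
  then have "compact {q\<in>K. f q = 0}" by (simp add: Int_absorb1)
  then have "compact (fst ` {q\<in>K. f q = 0})"
    by (intro compact_continuous_image continuous_intros)
  moreover have "fst ` {q\<in>K. f q = 0} = {\<xi>\<in>D. \<phi>1 \<xi> ` L1 \<inter> \<phi>2 \<xi> ` L2 \<noteq> {}}"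
  proof (intro equalityI subsetI)
    fix \<xi> assume "\<xi> \<in> {\<xi>\<in>D. \<phi>1 \<xi> ` L1 \<inter> \<phi>2 \<xi> ` L2 \<noteq> {}}"
    then obtain x1 x2 where "\<xi> \<in> D" "x1 \<in> L1" "x2 \<in> L2" "\<phi>1 \<xi> x1 = \<phi>2 \<xi> x2" by force
    then show "\<xi> \<in> fst ` {q\<in>K. f q = 0}"
      by (intro image_eqI[of _ _ "(\<xi>, x1, x2)"]) (auto simp: K_def f_def)
  qed (force simp: K_def f_def)
  ultimately show ?thesis by simp
qed

lemma coincidence_parameter_holder:
  fixes \<phi>1 :: "'d::real_normed_vector \<Rightarrow> 'a::metric_space \<Rightarrow> 'n::real_normed_vector"
    and \<phi>2 :: "'d \<Rightarrow> 'b::metric_space \<Rightarrow> 'n"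
  assumes H1: "\<forall>\<xi>\<in>D. \<forall>x\<in>L1. \<forall>y\<in>L1. norm (\<phi>1 \<xi> x - \<phi>1 \<xi> y) \<le> C * dist x y powr \<alpha>"
    and H2: "\<forall>\<xi>\<in>D. \<forall>x\<in>L2. \<forall>y\<in>L2. norm (\<phi>2 \<xi> x - \<phi>2 \<xi> y) \<le> C * dist x y powr \<alpha>"
    and transversal: "\<forall>x1\<in>L1. \<forall>x2\<in>L2. \<forall>\<xi>\<in>D. \<forall>\<xi>'\<in>D.
           norm ((\<phi>1 \<xi>' x1 - \<phi>2 \<xi>' x2) - (\<phi>1 \<xi> x1 - \<phi>2 \<xi> x2)) \<ge> M * norm (\<xi>' - \<xi>)"
    and "C \<ge> 0" "\<alpha> > 0"
    and "x1 \<in> L1" "y1 \<in> L1" "x2 \<in> L2" "y2 \<in> L2" "\<xi> \<in> D" "\<xi>' \<in> D"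
    and "\<phi>1 \<xi> x1 = \<phi>2 \<xi> x2" "\<phi>1 \<xi>' y1 = \<phi>2 \<xi>' y2"
  shows "M * dist \<xi>' \<xi> \<le> 2 * C * dist (x1, x2) (y1, y2) powr \<alpha>"
proof -
  have "M * dist \<xi>' \<xi> \<le> norm ((\<phi>1 \<xi>' x1 - \<phi>2 \<xi>' x2) - (\<phi>1 \<xi> x1 - \<phi>2 \<xi> x2))"
    using transversal assms(6-11) by (simp add: dist_norm)
  also have "\<dots> = norm ((\<phi>1 \<xi>' x1 - \<phi>1 \<xi>' y1) - (\<phi>2 \<xi>' x2 - \<phi>2 \<xi>' y2))"
    using assms(12,13) by (simp add: algebra_simps)
  also have "\<dots> \<le> norm (\<phi>1 \<xi>' x1 - \<phi>1 \<xi>' y1) + norm (\<phi>2 \<xi>' x2 - \<phi>2 \<xi>' y2)"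
    by (rule norm_triangle_ineq4)
  also have "\<dots> \<le> C * dist x1 y1 powr \<alpha> + C * dist x2 y2 powr \<alpha>"
    using H1 H2 assms(6-11) by (intro add_mono) auto
  also have "\<dots> \<le> C * dist (x1, x2) (y1, y2) powr \<alpha> + C * dist (x1, x2) (y1, y2) powr \<alpha>"
    using assms(4,5) dist_fst_le[of "(x1, x2)" "(y1, y2)"] dist_snd_le[of "(x1, x2)" "(y1, y2)"]
    by (intro add_mono mult_left_mono powr_mono2) auto
  finally show ?thesis by simp
qed

lemma coincidence_set_holder_image:
  fixes \<phi>1 :: "'d::real_normed_vector \<Rightarrow> 'a::metric_space \<Rightarrow> 'n::real_normed_vector"
    and \<phi>2 :: "'d \<Rightarrow> 'b::metric_space \<Rightarrow> 'n"
  assumes H1: "\<forall>\<xi>\<in>D. \<forall>x\<in>L1. \<forall>y\<in>L1. norm (\<phi>1 \<xi> x - \<phi>1 \<xi> y) \<le> C * dist x y powr \<alpha>"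
    and H2: "\<forall>\<xi>\<in>D. \<forall>x\<in>L2. \<forall>y\<in>L2. norm (\<phi>2 \<xi> x - \<phi>2 \<xi> y) \<le> C * dist x y powr \<alpha>"
    and transversal: "\<forall>x1\<in>L1. \<forall>x2\<in>L2. \<forall>\<xi>\<in>D. \<forall>\<xi>'\<in>D.
           norm ((\<phi>1 \<xi>' x1 - \<phi>2 \<xi>' x2) - (\<phi>1 \<xi> x1 - \<phi>2 \<xi> x2)) \<ge> M * norm (\<xi>' - \<xi>)"
    and "C \<ge> 0" "\<alpha> > 0" "M > 0"
  obtains S g where "S \<subseteq> L1 \<times> L2" "{\<xi>\<in>D. \<phi>1 \<xi> ` L1 \<inter> \<phi>2 \<xi> ` L2 \<noteq> {}} = g ` S"
    "\<And>p q. p \<in> S \<Longrightarrow> q \<in> S \<Longrightarrow> dist (g p) (g q) \<le> 2 * C / M * dist p q powr \<alpha>"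
proof -
  let ?\<Delta> = "{\<xi>\<in>D. \<phi>1 \<xi> ` L1 \<inter> \<phi>2 \<xi> ` L2 \<noteq> {}}"
  note parameter_holder = coincidence_parameter_holder[OF H1 H2 transversal assms(4,5)]
  define S where "S = {p \<in> L1 \<times> L2. \<exists>\<xi>\<in>D. \<phi>1 \<xi> (fst p) = \<phi>2 \<xi> (snd p)}"
  define g where "g p = (SOME \<xi>. \<xi> \<in> D \<and> \<phi>1 \<xi> (fst p) = \<phi>2 \<xi> (snd p))" for p
  have g: "g p \<in> D \<and> \<phi>1 (g p) (fst p) = \<phi>2 (g p) (snd p)" if "p \<in> S" for p
    using that unfolding S_def g_def by (metis (mono_tags, lifting) mem_Collect_eq someI_ex)
  have holder: "dist (g p) (g q) \<le> 2 * C / M * dist p q powr \<alpha>" if "p \<in> S" "q \<in> S" for p q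
  proof -
    obtain x1 x2 where p: "p = (x1, x2)" by (cases p)
    obtain y1 y2 where q: "q = (y1, y2)" by (cases q)
    have "M * dist (g q) (g p) \<le> 2 * C * dist p q powr \<alpha>"
      using parameter_holder[of x1 y1 x2 y2 "g p" "g q"] g[OF that(1)] g[OF that(2)] that
      unfolding p q S_def by auto
    then have "dist (g p) (g q) \<le> 2 * C * dist p q powr \<alpha> / M"
      using \<open>M > 0\<close> by (simp add: pos_le_divide_eq dist_commute mult.commute)
    then show ?thesis by (simp only: times_divide_eq_left)
  qed
  have "?\<Delta> \<subseteq> g ` S"
  proof
    fix \<xi> assume "\<xi> \<in> ?\<Delta>"
    then obtain x1 x2 where x: "\<xi> \<in> D" "x1 \<in> L1" "x2 \<in> L2" "\<phi>1 \<xi> x1 = \<phi>2 \<xi> x2" by force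
    then have "(x1, x2) \<in> S" unfolding S_def by auto
    have "M * dist (g (x1, x2)) \<xi> \<le> 0"
      using parameter_holder[of x1 x1 x2 x2 \<xi> "g (x1, x2)"] x g[OF \<open>(x1, x2) \<in> S\<close>] \<open>\<alpha> > 0\<close>
      by simp
    then have "\<xi> = g (x1, x2)" using \<open>M > 0\<close> by (simp add: mult_le_0_iff)
    then show "\<xi> \<in> g ` S" using \<open>(x1, x2) \<in> S\<close> by blast
  qed
  moreover have "g p \<in> ?\<Delta>" if "p \<in> S" for p
  proof -
    have "fst p \<in> L1" "snd p \<in> L2" using that unfolding S_def by auto
    then have "\<phi>1 (g p) (fst p) \<in> \<phi>1 (g p) ` L1 \<inter> \<phi>2 (g p) ` L2"
      using g[OF that] by (metis IntI image_eqI)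
    then show ?thesis using g[OF that] by blast
  qed
  ultimately have "?\<Delta> = g ` S" by blast
  moreover have "S \<subseteq> L1 \<times> L2" unfolding S_def by blast
  ultimately show ?thesis using that[OF _ _ holder] by blast
qed

theorem theorem13:
  fixes D :: "'d::euclidean_space set"
    and L1 :: "'a::metric_space set" and L2 :: "'b::metric_space set"
    and \<phi>1 :: "'d \<Rightarrow> 'a \<Rightarrow> 'n::euclidean_space"
    and \<phi>2 :: "'d \<Rightarrow> 'b \<Rightarrow> 'n"
    and C \<alpha> M :: real
  assumes "compact D" and "compact L1" and "compact L2"
    and "continuous_on (D \<times> L1) (\<lambda>(\<xi>, x). \<phi>1 \<xi> x)"
    and "continuous_on (D \<times> L2) (\<lambda>(\<xi>, x). \<phi>2 \<xi> x)"
    and "C > 0" and "0 < \<alpha>" and "\<alpha> \<le> 1"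
    and "\<forall>\<xi>\<in>D. \<forall>x\<in>L1. \<forall>y\<in>L1. norm (\<phi>1 \<xi> x - \<phi>1 \<xi> y) \<le> C * dist x y powr \<alpha>"
    and "\<forall>\<xi>\<in>D. \<forall>x\<in>L2. \<forall>y\<in>L2. norm (\<phi>2 \<xi> x - \<phi>2 \<xi> y) \<le> C * dist x y powr \<alpha>"
    and "M > 0"
    and "\<forall>x1\<in>L1. \<forall>x2\<in>L2. \<forall>\<xi>\<in>D. \<forall>\<xi>'\<in>D.
           norm ((\<phi>1 \<xi>' x1 - \<phi>2 \<xi>' x2) - (\<phi>1 \<xi> x1 - \<phi>2 \<xi> x2)) \<ge> M * norm (\<xi>' - \<xi>)"
  shows "compact {\<xi>\<in>D. \<phi>1 \<xi> ` L1 \<inter> \<phi>2 \<xi> ` L2 \<noteq> {}} \<and>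
         hausdorff_dim {\<xi>\<in>D. \<phi>1 \<xi> ` L1 \<inter> \<phi>2 \<xi> ` L2 \<noteq> {}}
           \<le> min (hausdorff_dim (L1 \<times> L2) / ereal \<alpha>) (ereal (real DIM('d)))"
proof -
  let ?\<Delta> = "{\<xi>\<in>D. \<phi>1 \<xi> ` L1 \<inter> \<phi>2 \<xi> ` L2 \<noteq> {}}"
  obtain S g where S: "S \<subseteq> L1 \<times> L2" "?\<Delta> = g ` S"
    and holder: "\<And>p q. p \<in> S \<Longrightarrow> q \<in> S \<Longrightarrow> dist (g p) (g q) \<le> 2 * C / M * dist p q powr \<alpha>"
    using coincidence_set_holder_image[OF assms(9,10,12) less_imp_le[OF assms(6)] assms(7,11)]
    by blast
  have "compact ?\<Delta>" using compact_coincidence_parameters[OF assms(1-5)] .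
  moreover have "hausdorff_dim ?\<Delta> \<le> hausdorff_dim (L1 \<times> L2) / ereal \<alpha>"
  proof -
    have "hausdorff_dim ?\<Delta> \<le> hausdorff_dim S / ereal \<alpha>"
      unfolding S(2) by (rule hausdorff_dim_holder_image[OF holder]) (use assms(6,7,11) in auto)
    also have "\<dots> \<le> hausdorff_dim (L1 \<times> L2) / ereal \<alpha>"
      using hausdorff_dim_mono[OF S(1)] assms(7) by simp
    finally show ?thesis .
  qed
  moreover have "hausdorff_dim ?\<Delta> \<le> ereal (real DIM('d))"
    using \<open>compact ?\<Delta>\<close> by (intro hausdorff_dim_bounded_euclidean_le compact_imp_bounded)
  ultimately show ?thesis by simp
qed

end
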